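(* Let $G$ be a connected graph on $n\geq 3$ vertices with $q(G)=2$ and minimum degree $\delta(G)\geq 3$, and let $v\in V(G)$ have eccentricity $\epsilon(v)$. Suppose every vertex of $N_i(v)$ for $i=2,3,\ldots,\epsilon(v)-1$ has exactly two predecessors, and each $N_i(v)$ for $i=1,2,\ldots,\epsilon(v)-1$ is an independent set. Then $d_0\le d_1\le\cdots\le d_{\epsilon(v)-1}$, where $d_i=|N_i(v)|$.
   Context: For a graph $G$ on $n$ vertices, $\mathcal{S}(G)$ is the set of real symmetric $n\times n$ matrices $A=[a_{ij}]$ with $a_{ij}\neq0$ for $i\ne j$ iff $\{i,j\}\in E(G)$ (diagonal unrestricted); $q(G)$ is the minimum number of distinct eigenvalues of a matrix in $\mathcal{S}(G)$. For $v\in V(G)$, $N_i(v)$ is the set of vertices at distance exactly $i$ from $v$ (so $N_0(v)=\{v\}$), and the eccentricity $\epsilon(v)$ is the maximum distance from $v$ to a vertex of $G$. If $u\in N_{i-1}(v)$ and $w\in N_i(v)$ are adjacent, $u$ is a predecessor of $w$ and $w$ a successor of $u$. *)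

theory Defs
  imports "HOL-Analysis.Analysis"
begin

definition simple_graph :: "('n::finite \<Rightarrow> 'n \<Rightarrow> bool) \<Rightarrow> bool" where
  "simple_graph E \<longleftrightarrow> (\<forall>u w. E u w \<longrightarrow> E w u) \<and> (\<forall>u. \<not> E u u)"

definition connected_graph :: "('n::finite \<Rightarrow> 'n \<Rightarrow> bool) \<Rightarrow> bool" where
  "connected_graph E \<longleftrightarrow> (\<forall>u w. E\<^sup>*\<^sup>* u w)"

definition degree :: "('n::finite \<Rightarrow> 'n \<Rightarrow> bool) \<Rightarrow> 'n \<Rightarrow> nat" where
  "degree E u = card {w. E u w}"

definition min_degree :: "('n::finite \<Rightarrow> 'n \<Rightarrow> bool) \<Rightarrow> nat" where
  "min_degree E = Min (range (degree E))"

definition gdist :: "('n \<Rightarrow> 'n \<Rightarrow> bool) \<Rightarrow> 'n \<Rightarrow> 'n \<Rightarrow> nat" where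
  "gdist E u w = (LEAST k. (E ^^ k) u w)"

definition dist_set :: "('n \<Rightarrow> 'n \<Rightarrow> bool) \<Rightarrow> 'n \<Rightarrow> nat \<Rightarrow> 'n set" where
  "dist_set E v i = {w. gdist E v w = i}"

definition eccentricity :: "('n::finite \<Rightarrow> 'n \<Rightarrow> bool) \<Rightarrow> 'n \<Rightarrow> nat" where
  "eccentricity E v = Max (range (gdist E v))"

definition predecessors :: "('n \<Rightarrow> 'n \<Rightarrow> bool) \<Rightarrow> 'n \<Rightarrow> 'n \<Rightarrow> 'n set" where
  "predecessors E v w = {u \<in> dist_set E v (gdist E v w - 1). E u w}"

definition independent_set :: "('n \<Rightarrow> 'n \<Rightarrow> bool) \<Rightarrow> 'n set \<Rightarrow> bool" where
  "independent_set E S \<longleftrightarrow> (\<forall>x\<in>S. \<forall>y\<in>S. \<not> E x y)"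

definition SG :: "('n::finite \<Rightarrow> 'n \<Rightarrow> bool) \<Rightarrow> (real^'n^'n) set" where
  "SG E = {A. transpose A = A \<and> (\<forall>i j. i \<noteq> j \<longrightarrow> (A $ i $ j \<noteq> 0 \<longleftrightarrow> E i j))}"

definition eigenvalues :: "real^'n^'n \<Rightarrow> real set" where
  "eigenvalues A = {c. \<exists>x. x \<noteq> 0 \<and> A *v x = c *\<^sub>R x}"

definition qG :: "('n::finite \<Rightarrow> 'n \<Rightarrow> bool) \<Rightarrow> nat" where
  "qG E = (LEAST k. \<exists>A \<in> SG E. card (eigenvalues A) = k)"

end

theory Submission
  imports Defs
begin

text \<open>A symmetric matrix with only two eigenvalues \<open>l, m\<close> satisfies \<open>(A - l)(A - m) = 0\<close>. Reading
  off an off-diagonal entry for a matrix in \<open>S(G)\<close> shows that two distinct non-adjacent vertices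
  never have exactly one common neighbour. Under the layer hypotheses every vertex of \<open>N\<^sub>i(v)\<close>
  (\<open>i < \<epsilon>(v) - 1\<close>) then has at least two successors: a unique successor \<open>w\<close> of \<open>u\<close> would,
  together with a successor of \<open>w\<close>, form such a forbidden pair. Since every vertex of
  \<open>N\<^sub>i\<^sub>+\<^sub>1(v)\<close> has at most two predecessors, double counting the edges between consecutive
  layers gives \<open>2 d\<^sub>i \<le> 2 d\<^sub>i\<^sub>+\<^sub>1\<close>.\<close>

lemma symmetric_matrix_inner_commute:
  fixes A :: "real^'n^'n"
  assumes "transpose A = A"
  shows "(A *v x) \<bullet> y = x \<bullet> (A *v y)"
proof -
  have "A *v x = x v* A" using transpose_matrix_vector[of A x] assms by simp
  thus ?thesis by (simp add: dot_lmul_matrix)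
qed

lemma linear_le_quadratic_imp_zero:
  fixes b C :: real
  assumes "\<And>t. 2 * t * b \<le> t\<^sup>2 * C"
  shows "b = 0"
proof (rule ccontr)
  assume "b \<noteq> 0"
  define s where "s = 1 / (\<bar>C\<bar> + 1)"
  have s: "s > 0" "s * C < 1" unfolding s_def by (auto simp: field_simps)
  have "(s * b\<^sup>2) * 2 \<le> (s * b\<^sup>2) * (s * C)"
    using assms[of "s * b"] by (simp add: power2_eq_square algebra_simps)
  moreover have "s * b\<^sup>2 > 0" using s \<open>b \<noteq> 0\<close> by simp
  ultimately have "2 \<le> s * C" by (simp only: mult_le_cancel_left_pos)
  thus False using s by simp
qed

lemma rayleigh_quotient_attains_max:
  fixes A :: "real^'n^'n"
  assumes "subspace V" and "x \<in> V" and "x \<noteq> 0"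
  shows "\<exists>x0\<in>V. norm x0 = 1 \<and> (\<forall>y\<in>V. y \<bullet> (A *v y) \<le> (x0 \<bullet> (A *v x0)) * (y \<bullet> y))"
proof -
  define S where "S = V \<inter> sphere 0 1"
  define f where "f = (\<lambda>y::real^'n. y \<bullet> (A *v y))"
  have "compact S" unfolding S_def
    using closed_subspace[OF assms(1)] by (simp add: closed_Int_compact)
  moreover have "x /\<^sub>R norm x \<in> S" unfolding S_def using assms by (simp add: subspace_scale)
  moreover have "continuous_on S f" unfolding f_def
    by (intro continuous_intros linear_continuous_on) (auto intro: linear_linear)
  ultimately obtain x0 where x0: "x0 \<in> S" and max: "\<forall>y\<in>S. f y \<le> f x0"
    using continuous_attains_sup[of S f] by blast
  have "f y \<le> f x0 * (y \<bullet> y)" if "y \<in> V" for y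
  proof (cases "y = 0")
    case False
    have "y /\<^sub>R norm y \<in> S" unfolding S_def using that False assms(1) by (simp add: subspace_scale)
    hence "f (y /\<^sub>R norm y) \<le> f x0" using max by blast
    moreover have "f (y /\<^sub>R norm y) = f y / (y \<bullet> y)" unfolding f_def
      by (simp add: power2_eq_square matrix_vector_mult_scaleR dot_square_norm field_simps)
    moreover have "y \<bullet> y > 0" using False by simp
    ultimately show ?thesis by (simp add: field_simps)
  qed (simp add: f_def)
  thus ?thesis using x0 unfolding S_def f_def by auto
qed

text \<open>A maximiser of the Rayleigh quotient on an invariant subspace is an eigenvector: otherwise
  moving it in the direction of its residual would increase the quotient to first order.\<close>

lemma rayleigh_max_is_eigenvector:
  fixes A :: "real^'n^'n"
  assumes sym: "transpose A = A" and sub: "subspace V" and inv: "\<forall>x\<in>V. A *v x \<in> V"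
    and x0V: "x0 \<in> V" and x0x0: "x0 \<bullet> x0 = 1"
    and max: "\<forall>y\<in>V. y \<bullet> (A *v y) \<le> (x0 \<bullet> (A *v x0)) * (y \<bullet> y)"
  shows "A *v x0 = (x0 \<bullet> (A *v x0)) *\<^sub>R x0"
proof -
  define M where "M = x0 \<bullet> (A *v x0)"
  define w where "w = A *v x0 - M *\<^sub>R x0"
  have wV: "w \<in> V" unfolding w_def using inv x0V sub by (simp add: subspace_diff subspace_scale)
  have wx0: "x0 \<bullet> w = 0"
    unfolding w_def M_def using x0x0 by (simp add: inner_diff_right)
  define b where "b = (A *v x0) \<bullet> w"
  have "2 * t * b \<le> t\<^sup>2 * (M * (w \<bullet> w) - w \<bullet> (A *v w))" for t
  proof -
    let ?y = "x0 + t *\<^sub>R w"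
    have "M + 2 * t * b + t\<^sup>2 * (w \<bullet> (A *v w)) = ?y \<bullet> (A *v ?y)"
      unfolding M_def b_def using symmetric_matrix_inner_commute[OF sym, of w x0]
      by (simp add: algebra_simps inner_add_left inner_add_right matrix_vector_mult_scaleR
          power2_eq_square inner_commute)
    also have "\<dots> \<le> M * (?y \<bullet> ?y)"
      using max M_def x0V wV sub by (simp add: subspace_add subspace_scale)
    also have "?y \<bullet> ?y = 1 + t\<^sup>2 * (w \<bullet> w)"
      using x0x0 wx0 by (simp add: algebra_simps inner_add_left inner_add_right
          power2_eq_square inner_commute)
    finally show ?thesis by (simp add: algebra_simps)
  qed
  hence "b = 0" by (rule linear_le_quadratic_imp_zero)
  moreover have "w \<bullet> w = b - M * (x0 \<bullet> w)"
    unfolding b_def by (simp add: w_def inner_diff_left)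
  ultimately have "w = 0" using wx0 by simp
  thus ?thesis unfolding w_def M_def by simp
qed

lemma symmetric_matrix_eigenvector_in_invariant_subspace:
  fixes A :: "real^'n^'n"
  assumes "transpose A = A" and "subspace V" and "\<forall>x\<in>V. A *v x \<in> V"
    and "x \<in> V" and "x \<noteq> 0"
  obtains z c where "z \<in> V" "z \<noteq> 0" "A *v z = c *\<^sub>R z"
proof -
  obtain x0 where "x0 \<in> V" "norm x0 = 1"
    and "\<forall>y\<in>V. y \<bullet> (A *v y) \<le> (x0 \<bullet> (A *v x0)) * (y \<bullet> y)"
    using rayleigh_quotient_attains_max[OF assms(2,4,5)] by blast
  moreover from this have "x0 \<bullet> x0 = 1" "x0 \<noteq> 0" by (auto simp: dot_square_norm)
  ultimately show ?thesis
    using rayleigh_max_is_eigenvector[OF assms(1-3)] that by metis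
qed

text \<open>For symmetric \<open>A\<close> the matrix \<open>B = (A - l)(A - m)\<close> is symmetric and commutes with \<open>A\<close>,
  so \<open>A\<close> has an eigenvector in the range of \<open>B\<close>; \<open>B\<close> kills it, hence kills its own range,
  hence is zero.\<close>

lemma symmetric_two_eigenvalues_annihilated:
  fixes A :: "real^'n^'n"
  assumes sym: "transpose A = A" and ev: "eigenvalues A \<subseteq> {l, m}"
  shows "A *v (A *v x) - (l + m) *\<^sub>R (A *v x) + (l * m) *\<^sub>R x = 0"
proof (rule ccontr)
  define B :: "real^'n^'n" where "B = A ** A - (l + m) *\<^sub>R A + (l * m) *\<^sub>R mat 1"
  have Bv: "B *v y = A *v (A *v y) - (l + m) *\<^sub>R (A *v y) + (l * m) *\<^sub>R y" for y
    unfolding B_def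
    by (simp add: matrix_vector_mult_add_rdistrib matrix_vector_mult_diff_rdistrib
        matrix_vector_mul_assoc scaleR_matrix_vector_assoc[symmetric])
  have B_sym: "(B *v y) \<bullet> z = y \<bullet> (B *v z)" for y z
    unfolding Bv using symmetric_matrix_inner_commute[OF sym]
    by (simp add: inner_add_left inner_add_right inner_diff_left inner_diff_right)
  define V where "V = range (\<lambda>y. B *v y)"
  have "subspace V" unfolding V_def
    by (metis linear_subspace_image matrix_vector_mul_linear subspace_UNIV)
  moreover have "\<forall>z\<in>V. A *v z \<in> V"
    unfolding V_def Bv
    by (auto simp: matrix_vector_right_distrib matrix_vector_mult_diff_distrib
        matrix_vector_mult_scaleR intro!: image_eqI[where x = "A *v _"])
  moreover assume "A *v (A *v x) - (l + m) *\<^sub>R (A *v x) + (l * m) *\<^sub>R x \<noteq> 0"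
  hence "B *v x \<in> V" "B *v x \<noteq> 0" unfolding V_def by (auto simp: Bv)
  ultimately obtain z c where zV: "z \<in> V" and "z \<noteq> 0" and Az: "A *v z = c *\<^sub>R z"
    using symmetric_matrix_eigenvector_in_invariant_subspace[OF sym] by metis
  hence "c = l \<or> c = m" using ev unfolding eigenvalues_def by blast
  hence "B *v z = 0"
    unfolding Bv Az using Az by (auto simp: matrix_vector_mult_scaleR algebra_simps)
  moreover obtain y where "z = B *v y" using zV unfolding V_def by blast
  ultimately have "z \<bullet> z = 0" using B_sym by simp
  thus False using \<open>z \<noteq> 0\<close> by simp
qed

lemma symmetric_two_eigenvalues_entry:
  fixes A :: "real^'n^'n"
  assumes "transpose A = A" and "eigenvalues A \<subseteq> {l, m}"
  shows "(\<Sum>k\<in>UNIV. A$i$k * A$k$j) - (l + m) * A$i$j + l * m * (if i = j then 1 else 0) = 0"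
proof -
  have "(A *v axis j 1) $ k = A$k$j" for k
    by (simp add: matrix_vector_mult_def axis_def if_distrib cong: if_cong)
  thus ?thesis
    using arg_cong[OF symmetric_two_eigenvalues_annihilated[OF assms, of "axis j 1"], of "\<lambda>x. x $ i"]
    by (simp add: matrix_vector_mult_def axis_def)
qed

lemma qG_attained:
  assumes "simple_graph E"
  shows "\<exists>A\<in>SG E. card (eigenvalues A) = qG E"
proof -
  have "(\<chi> i j. if E i j then 1 else 0) \<in> SG E"
    using assms unfolding SG_def simple_graph_def by (auto simp: vec_eq_iff transpose_def)
  hence "\<exists>k. \<exists>A\<in>SG E. card (eigenvalues A) = k" by blast
  thus ?thesis unfolding qG_def by (rule LeastI_ex)
qed

lemma two_eigenvalues_no_unique_common_neighbour:
  assumes A: "A \<in> SG E" and ev: "eigenvalues A \<subseteq> {l, m}" and irrefl: "\<And>u. \<not> E u u"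
    and xy: "x \<noteq> y" "\<not> E x y"
  shows "card {k. E x k \<and> E k y} \<noteq> 1"
proof
  assume "card {k. E x k \<and> E k y} = 1"
  then obtain w where common: "{k. E x k \<and> E k y} = {w}" by (auto simp: card_Suc_eq)
  have sym: "transpose A = A" and pat: "\<And>i j. i \<noteq> j \<Longrightarrow> A$i$j \<noteq> 0 \<longleftrightarrow> E i j"
    using A unfolding SG_def by auto
  have Axy: "A$x$y = 0" using pat[OF xy(1)] xy(2) by simp
  have "E x w" "E w y" using common by auto
  hence Axw: "A$x$w \<noteq> 0" and Awy: "A$w$y \<noteq> 0" using pat irrefl by metis+
  have others: "A$x$k * A$k$y = 0" if "k \<in> UNIV - {w}" for k
  proof (cases "k = x \<or> k = y")
    case False
    hence "\<not> (E x k \<and> E k y)" using that common by auto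
    thus ?thesis using pat[of x k] pat[of k y] False by auto
  qed (use Axy in auto)
  have "0 = (\<Sum>k\<in>UNIV. A$x$k * A$k$y)"
    using symmetric_two_eigenvalues_entry[OF sym ev, of x y] Axy xy(1) by simp
  also have "\<dots> = A$x$w * A$w$y + (\<Sum>k\<in>UNIV - {w}. A$x$k * A$k$y)"
    by (simp add: sum.remove)
  also have "\<dots> = A$x$w * A$w$y" using others by (simp add: sum.neutral)
  finally show False using Axw Awy by simp
qed

lemma qG_2_no_unique_common_neighbour:
  assumes "simple_graph E" and "qG E = 2" and "x \<noteq> y" and "\<not> E x y"
  shows "card {k. E x k \<and> E k y} \<noteq> 1"
proof -
  obtain A where "A \<in> SG E" and "card (eigenvalues A) = 2"
    using qG_attained[OF assms(1)] assms(2) by auto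
  moreover from this obtain l m where "eigenvalues A = {l, m}" by (auto simp: card_2_iff)
  ultimately show ?thesis
    using two_eigenvalues_no_unique_common_neighbour assms unfolding simple_graph_def by blast
qed

lemma relpowp_gdist:
  assumes "connected_graph E"
  shows "(E ^^ gdist E u w) u w"
proof -
  have "E\<^sup>*\<^sup>* u w" using assms unfolding connected_graph_def by blast
  then obtain k where "(E ^^ k) u w" by (auto simp: rtranclp_power)
  thus ?thesis unfolding gdist_def by (rule LeastI)
qed

lemma gdist_le: "(E ^^ k) u w \<Longrightarrow> gdist E u w \<le> k"
  unfolding gdist_def by (rule Least_le)

lemma gdist_eq_0_iff:
  assumes "connected_graph E"
  shows "gdist E v w = 0 \<longleftrightarrow> w = v"
  using relpowp_gdist[OF assms, of v w] gdist_le[of 0 E v v] by auto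

lemma gdist_edge_le:
  assumes "connected_graph E" and "E x y"
  shows "gdist E v y \<le> gdist E v x + 1"
  using gdist_le[OF relpowp_Suc_I[OF relpowp_gdist[OF assms(1)] assms(2)]] by simp

lemma gdist_edge_cases:
  assumes "simple_graph E" and "connected_graph E" and "E x y"
  obtains "gdist E v y = gdist E v x + 1" | "gdist E v y = gdist E v x" | "gdist E v y + 1 = gdist E v x"
proof -
  have "E y x" using assms(1,3) unfolding simple_graph_def by blast
  thus ?thesis using gdist_edge_le[OF assms(2,3), of v] gdist_edge_le[OF assms(2), of y x v] that
    by linarith
qed

lemma dist_set_0:
  assumes "connected_graph E"
  shows "dist_set E v 0 = {v}"
  using gdist_eq_0_iff[OF assms] unfolding dist_set_def by auto

lemma card_predecessors_le_1:
  assumes "connected_graph E" and "gdist E v w \<le> 1"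
  shows "card (predecessors E v w) \<le> 1"
proof -
  have "predecessors E v w \<subseteq> {v}"
    using assms dist_set_0[OF assms(1)] unfolding predecessors_def by auto
  thus ?thesis using card_mono[of "{v}"] by fastforce
qed

lemma independent_set_dist_set_0:
  assumes "simple_graph E" and "connected_graph E"
  shows "independent_set E (dist_set E v 0)"
  using assms unfolding dist_set_0[OF assms(2)] simple_graph_def independent_set_def by simp

definition successors :: "('n \<Rightarrow> 'n \<Rightarrow> bool) \<Rightarrow> 'n \<Rightarrow> 'n \<Rightarrow> 'n set" where
  "successors E v u = {w \<in> dist_set E v (gdist E v u + 1). E u w}"

lemma min_degree_le_card_neighbours:
  fixes E :: "'n::finite \<Rightarrow> 'n \<Rightarrow> bool"
  shows "min_degree E \<le> card {w. E u w}"
  unfolding min_degree_def degree_def[symmetric] by (rule Min_le) auto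

lemma card_neighbours_le_predecessors_successors:
  fixes E :: "'n::finite \<Rightarrow> 'n \<Rightarrow> bool"
  assumes sg: "simple_graph E" and cg: "connected_graph E"
    and indep: "independent_set E (dist_set E v (gdist E v u))"
  shows "card {w. E u w} \<le> card (predecessors E v u) + card (successors E v u)"
proof -
  have "{w. E u w} \<subseteq> predecessors E v u \<union> successors E v u"
  proof
    fix w assume "w \<in> {w. E u w}"
    hence uw: "E u w" by simp
    hence wu: "E w u" using sg unfolding simple_graph_def by blast
    show "w \<in> predecessors E v u \<union> successors E v u"
      by (rule gdist_edge_cases[OF sg cg uw, of v])
        (use uw wu indep in \<open>auto simp: predecessors_def successors_def dist_set_def independent_set_def\<close>)
  qed
  hence "card {w. E u w} \<le> card (predecessors E v u \<union> successors E v u)" by (intro card_mono) auto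
  thus ?thesis using card_Un_le order_trans by blast
qed

lemma card_successors_ge_2:
  fixes E :: "'n::finite \<Rightarrow> 'n \<Rightarrow> bool"
  assumes sg: "simple_graph E" and cg: "connected_graph E" and q: "qG E = 2"
    and deg: "min_degree E \<ge> 3" and u: "gdist E v u = i"
    and pred_u: "card (predecessors E v u) \<le> 2"
    and pred_succ: "\<forall>w\<in>successors E v u. card (predecessors E v w) \<le> 2"
    and indep: "independent_set E (dist_set E v i)" "independent_set E (dist_set E v (i + 1))"
  shows "card (successors E v u) \<ge> 2"
proof (rule ccontr)
  have "3 \<le> card (predecessors E v u) + card (successors E v u)"
    using card_neighbours_le_predecessors_successors[OF sg cg, of v u] indep(1) u
      min_degree_le_card_neighbours[of E u] deg by simp
  moreover assume "\<not> card (successors E v u) \<ge> 2"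
  ultimately have "card (successors E v u) = 1" using pred_u by linarith
  then obtain w where succ_u: "successors E v u = {w}" by (auto simp: card_1_singleton_iff)
  hence uw: "E u w" and w: "gdist E v w = i + 1"
    using u unfolding successors_def dist_set_def by auto
  have "3 \<le> card (predecessors E v w) + card (successors E v w)"
    using card_neighbours_le_predecessors_successors[OF sg cg, of v w] indep(2) w
      min_degree_le_card_neighbours[of E w] deg by simp
  hence "successors E v w \<noteq> {}" using pred_succ succ_u by fastforce
  then obtain z where wz: "E w z" and z: "gdist E v z = i + 2"
    using w unfolding successors_def dist_set_def by auto
  have "u \<noteq> z" "\<not> E u z" using u z gdist_edge_le[OF cg, of u z v] by auto
  moreover have "{k. E u k \<and> E k z} = {w}"
  proof (intro equalityI subsetI)
    fix k assume "k \<in> {k. E u k \<and> E k z}"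
    hence k: "E u k" "E k z" by auto
    hence "gdist E v k = i + 1"
      using u z gdist_edge_le[OF cg k(1), of v] gdist_edge_le[OF cg k(2), of v] by simp
    hence "k \<in> successors E v u" using k u unfolding successors_def dist_set_def by simp
    thus "k \<in> {w}" using succ_u by simp
  qed (use uw wz in simp)
  ultimately show False using qG_2_no_unique_common_neighbour[OF sg q] by fastforce
qed

lemma sum_card_filter_swap:
  assumes "finite A" and "finite B"
  shows "(\<Sum>u\<in>A. card {w\<in>B. R u w}) = (\<Sum>w\<in>B. card {u\<in>A. R u w})"
proof -
  have "(\<Sum>u\<in>A. card {w\<in>B. R u w}) = (\<Sum>u\<in>A. \<Sum>w\<in>B. of_bool (R u w))"
    using assms by (simp add: Int_def)
  also have "\<dots> = (\<Sum>w\<in>B. \<Sum>u\<in>A. of_bool (R u w))" by (rule sum.swap)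
  also have "\<dots> = (\<Sum>w\<in>B. card {u\<in>A. R u w})"
    using assms by (simp add: Int_def)
  finally show ?thesis .
qed

lemma card_le_card_by_double_counting:
  assumes "finite A" and "finite B" and "k > 0"
    and "\<And>u. u \<in> A \<Longrightarrow> k \<le> card {w\<in>B. R u w}"
    and "\<And>w. w \<in> B \<Longrightarrow> card {u\<in>A. R u w} \<le> k"
  shows "card A \<le> card B"
proof -
  have "k * card A \<le> (\<Sum>u\<in>A. card {w\<in>B. R u w})"
    using sum_bounded_below[of A k] assms(4) by (simp add: mult.commute)
  also have "\<dots> = (\<Sum>w\<in>B. card {u\<in>A. R u w})" by (rule sum_card_filter_swap[OF assms(1,2)])
  also have "\<dots> \<le> k * card B"
    using sum_bounded_above[of B _ k] assms(5) by (simp add: mult.commute)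
  finally show ?thesis using assms(3) by simp
qed

theorem mainTheorem5:
  fixes E :: "'n::finite \<Rightarrow> 'n \<Rightarrow> bool" and v :: 'n
  assumes "simple_graph E"
    and "connected_graph E"
    and "CARD('n) \<ge> 3"
    and "qG E = 2"
    and "min_degree E \<ge> 3"
    and "\<forall>i. 2 \<le> i \<and> i \<le> eccentricity E v - 1 \<longrightarrow>
           (\<forall>w \<in> dist_set E v i. card (predecessors E v w) = 2)"
    and "\<forall>i. 1 \<le> i \<and> i \<le> eccentricity E v - 1 \<longrightarrow> independent_set E (dist_set E v i)"
  shows "\<forall>i. i + 1 \<le> eccentricity E v - 1 \<longrightarrow>
           card (dist_set E v i) \<le> card (dist_set E v (i + 1))"
proof (intro allI impI)
  note sg = assms(1) and cg = assms(2)
  fix i assume i: "i + 1 \<le> eccentricity E v - 1"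
  have pred: "card (predecessors E v w) \<le> 2" if "gdist E v w \<le> i + 1" for w
  proof (cases "gdist E v w \<le> 1")
    case False
    thus ?thesis using assms(6)[rule_format, of "gdist E v w" w] i that by (simp add: dist_set_def)
  qed (use card_predecessors_le_1[OF cg, of v w] in simp)
  have indep: "independent_set E (dist_set E v j)" if "j \<le> i + 1" for j
    using independent_set_dist_set_0[OF sg cg] assms(7) i that by (cases j) auto
  have "2 \<le> card {w \<in> dist_set E v (i + 1). E u w}" if "u \<in> dist_set E v i" for u
  proof -
    have u: "gdist E v u = i" using that by (simp add: dist_set_def)
    moreover from this have "\<forall>w\<in>successors E v u. card (predecessors E v w) \<le> 2"
      using pred by (simp add: successors_def dist_set_def)
    ultimately have "2 \<le> card (successors E v u)"
      by (intro card_successors_ge_2[OF sg cg assms(4,5)] pred indep) auto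
    thus ?thesis using u by (simp add: successors_def)
  qed
  moreover have "card {u \<in> dist_set E v i. E u w} \<le> 2" if "w \<in> dist_set E v (i + 1)" for w
    using pred[of w] that unfolding predecessors_def dist_set_def by simp
  ultimately show "card (dist_set E v i) \<le> card (dist_set E v (i + 1))"
    by (intro card_le_card_by_double_counting[where k = 2 and R = E]) auto
qed

end
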